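(* Let $T=(V,E,w)$ be a tree with an up-monotonic and rounded cost function, rooted at the vertex $r$ witnessing up-monotonicity, and let $f_{opt}$ be an optimal structured extended strategy function for $T$ (i.e., minimizing $\sup\bigcup_{u}f(u)$ among structured extended strategy functions). Let $L$ be a layer component, and let $L_1,\dots,L_k$ be the layer components directly below $L$, with $v_j=\mathrm{root}(L_j)$. Define $f'$ by $f'(u)=f_{opt}(u)$ if $u$ is a proper descendant of some $v_j$, and $f'(u)=f_{opt}(u)+w(L)$ for all other vertices $u$ (including the $v_j$ and all vertices of $L$). Then $f'$ is a structured extended strategy function for $T$.
   Context: $w$ is up-monotonic with respect to $r$: $w(u)\le w(v)$ whenever $v$ lies on the path from $r$ to $u$; rounded: every $w(u)$ is $2^j$ with $j$ a nonnegative integer. $T_u$ denotes the subtree of $u$ and its descendants. A layer is the set of all vertices of a given cost; a layer component is a connected component of the subgraph induced by a layer; $\mathrm{root}(L)$ is the vertex of $L$ closest to $r$; $w(L)$ is the common cost of its vertices; $L'$ is directly below $L$ if the parent of $\mathrm{root}(L')$ lies in $L$. Intervals are $[a,b)$ with integers $0\le a<b$, $|[a,b)|=b-a$; $[a,b)>[a',b')$ iff $a\ge b'$; $[a,b)+c=[a+c,b+c)$. An extended strategy function for $T$ is a map $f$ assigning to each vertex $u$ an interval $f(u)$ with $|f(u)|\ge w(u)$, such that for any distinct $v_1,v_2$ with $f(v_1)\cap f(v_2)\ne\emptyset$, the path between $v_1$ and $v_2$ contains a vertex $v_3$ with $f(v_3)>f(v_1)$ and $f(v_3)>f(v_2)$.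 It is structured if for every layer component $L$, with $u=\mathrm{root}(L)$, $f(u)>f(x)$ for every $x\in V(T_u)\setminus\{u\}$. *)

theory Defs
  imports Main
begin

definition is_path :: "('a \<times> 'a) set \<Rightarrow> 'a list \<Rightarrow> bool" where
  "is_path E xs \<longleftrightarrow> xs \<noteq> [] \<and> distinct xs \<and>
     (\<forall>i. Suc i < length xs \<longrightarrow> (xs ! i, xs ! Suc i) \<in> E)"

definition path_betw :: "('a \<times> 'a) set \<Rightarrow> 'a \<Rightarrow> 'a \<Rightarrow> 'a list \<Rightarrow> bool" where
  "path_betw E u v xs \<longleftrightarrow> is_path E xs \<and> hd xs = u \<and> last xs = v"

definition is_tree :: "'a set \<Rightarrow> ('a \<times> 'a) set \<Rightarrow> bool" where
  "is_tree V E \<longleftrightarrow> finite V \<and> V \<noteq> {} \<and> E \<subseteq> V \<times> V \<and> sym E \<and> irrefl E \<and>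
     (\<forall>u\<in>V. \<forall>v\<in>V. \<exists>xs. path_betw E u v xs) \<and>
     \<not> (\<exists>xs. is_path E xs \<and> 3 \<le> length xs \<and> (last xs, hd xs) \<in> E)"

text \<open>x lies on the (unique, in a tree) path between u and v.\<close>
definition on_path :: "('a \<times> 'a) set \<Rightarrow> 'a \<Rightarrow> 'a \<Rightarrow> 'a \<Rightarrow> bool" where
  "on_path E u v x \<longleftrightarrow> (\<exists>xs. path_betw E u v xs \<and> x \<in> set xs)"

definition dist :: "('a \<times> 'a) set \<Rightarrow> 'a \<Rightarrow> 'a \<Rightarrow> nat" where
  "dist E u v = (LEAST n. \<exists>xs. path_betw E u v xs \<and> length xs = Suc n)"

definition subtree :: "'a set \<Rightarrow> ('a \<times> 'a) set \<Rightarrow> 'a \<Rightarrow> 'a \<Rightarrow> 'a set" where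
  "subtree V E r u = {x \<in> V. on_path E r x u}"

definition is_parent :: "('a \<times> 'a) set \<Rightarrow> 'a \<Rightarrow> 'a \<Rightarrow> 'a \<Rightarrow> bool" where
  "is_parent E r p x \<longleftrightarrow> x \<noteq> r \<and> (p, x) \<in> E \<and> on_path E r x p"

definition up_monotonic :: "'a set \<Rightarrow> ('a \<times> 'a) set \<Rightarrow> 'a \<Rightarrow> ('a \<Rightarrow> nat) \<Rightarrow> bool" where
  "up_monotonic V E r w \<longleftrightarrow> (\<forall>u\<in>V. \<forall>v\<in>V. on_path E r u v \<longrightarrow> w u \<le> w v)"

definition rounded :: "'a set \<Rightarrow> ('a \<Rightarrow> nat) \<Rightarrow> bool" where
  "rounded V w \<longleftrightarrow> (\<forall>u\<in>V. \<exists>j::nat. w u = 2 ^ j)"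

definition layer_comp :: "'a set \<Rightarrow> ('a \<times> 'a) set \<Rightarrow> ('a \<Rightarrow> nat) \<Rightarrow> 'a set \<Rightarrow> bool" where
  "layer_comp V E w L \<longleftrightarrow> L \<noteq> {} \<and> L \<subseteq> V \<and> (\<exists>c. \<forall>x\<in>L. w x = c) \<and>
     (\<forall>x\<in>L. \<forall>y\<in>L. \<exists>xs. path_betw E x y xs \<and> set xs \<subseteq> L) \<and>
     (\<forall>x\<in>L. \<forall>y\<in>V. (x, y) \<in> E \<and> w y = w x \<longrightarrow> y \<in> L)"

definition is_root :: "('a \<times> 'a) set \<Rightarrow> 'a \<Rightarrow> 'a set \<Rightarrow> 'a \<Rightarrow> bool" where
  "is_root E r L x \<longleftrightarrow> x \<in> L \<and> (\<forall>y\<in>L. dist E r x \<le> dist E r y)"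

definition layer_cost :: "('a \<Rightarrow> nat) \<Rightarrow> 'a set \<Rightarrow> nat" where
  "layer_cost w L = w (SOME x. x \<in> L)"

definition directly_below :: "('a \<times> 'a) set \<Rightarrow> 'a \<Rightarrow> 'a set \<Rightarrow> 'a set \<Rightarrow> bool" where
  "directly_below E r L' L \<longleftrightarrow> (\<exists>x p. is_root E r L' x \<and> is_parent E r p x \<and> p \<in> L)"

section \<open>Intervals [a,b) as pairs (a,b)\<close>

definition ilen :: "nat \<times> nat \<Rightarrow> nat" where
  "ilen I = snd I - fst I"

definition iinter :: "nat \<times> nat \<Rightarrow> nat \<times> nat \<Rightarrow> bool" where
  "iinter I J \<longleftrightarrow> max (fst I) (fst J) < min (snd I) (snd J)"

definition igreater :: "nat \<times> nat \<Rightarrow> nat \<times> nat \<Rightarrow> bool" where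
  "igreater I J \<longleftrightarrow> snd J \<le> fst I"

definition ishift :: "nat \<times> nat \<Rightarrow> nat \<Rightarrow> nat \<times> nat" where
  "ishift I c = (fst I + c, snd I + c)"

definition ext_strategy :: "'a set \<Rightarrow> ('a \<times> 'a) set \<Rightarrow> ('a \<Rightarrow> nat) \<Rightarrow> ('a \<Rightarrow> nat \<times> nat) \<Rightarrow> bool" where
  "ext_strategy V E w f \<longleftrightarrow>
     (\<forall>u\<in>V. fst (f u) < snd (f u) \<and> w u \<le> ilen (f u)) \<and>
     (\<forall>v1\<in>V. \<forall>v2\<in>V. v1 \<noteq> v2 \<and> iinter (f v1) (f v2) \<longrightarrow>
        (\<exists>v3. on_path E v1 v2 v3 \<and> igreater (f v3) (f v1) \<and> igreater (f v3) (f v2)))"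

definition structured_ext :: "'a set \<Rightarrow> ('a \<times> 'a) set \<Rightarrow> 'a \<Rightarrow> ('a \<Rightarrow> nat) \<Rightarrow> ('a \<Rightarrow> nat \<times> nat) \<Rightarrow> bool" where
  "structured_ext V E r w f \<longleftrightarrow> ext_strategy V E w f \<and>
     (\<forall>L u. layer_comp V E w L \<and> is_root E r L u \<longrightarrow>
        (\<forall>x \<in> subtree V E r u - {u}. igreater (f u) (f x)))"

text \<open>sup of the union of all intervals f(u) = [a_u,b_u): the maximal right endpoint.\<close>
definition span :: "'a set \<Rightarrow> ('a \<Rightarrow> nat \<times> nat) \<Rightarrow> nat" where
  "span V f = Max ((\<lambda>u. snd (f u)) ` V)"

definition optimal_structured :: "'a set \<Rightarrow> ('a \<times> 'a) set \<Rightarrow> 'a \<Rightarrow> ('a \<Rightarrow> nat) \<Rightarrow> ('a \<Rightarrow> nat \<times> nat) \<Rightarrow> bool" where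
  "optimal_structured V E r w f \<longleftrightarrow> structured_ext V E r w f \<and>
     (\<forall>g. structured_ext V E r w g \<longrightarrow> span V f \<le> span V g)"

end

theory Submission
  imports Defs
begin

text \<open>Let D (\<open>kept\<close> below) be the union of the proper subtrees T_v - {v} of the roots v of the layer components
  below L, i.e. the set of vertices on which f' agrees with f_opt. Because f_opt is structured,
  f_opt(v) lies above f_opt(x) for every x in T_v - {v}; D is closed under taking subtrees, and
  every vertex of D lies strictly below such a root v outside D. A path can leave T_v - {v} only
  through v, so v separates any vertex of D from any vertex outside D.
  Shifting all vertices outside D by the same amount preserves the relative position of two
  intervals on the same side of D (a witness between two vertices outside D cannot lie in D, by
  separation). For a in D and b outside D whose shifted intervals meet, either f_opt(b) lies
  below f_opt(a) and the separating root above a is a witness, or f_opt(a) and f_opt(b) meet and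
  the witness of f_opt, or the separating root above it, is one.\<close>

lemma is_path_iff_successively:
  "is_path E xs \<longleftrightarrow> xs \<noteq> [] \<and> distinct xs \<and> successively (\<lambda>x y. (x, y) \<in> E) xs"
  by (simp add: is_path_def successively_conv_nth)

lemma is_path_rev:
  assumes "sym E" and "is_path E xs"
  shows "is_path E (rev xs)"
proof -
  have "successively (\<lambda>x y. (y, x) \<in> E) xs"
    using assms(2) unfolding is_path_iff_successively
    by (blast intro: successively_mono dest: symD[OF assms(1)])
  then show ?thesis using assms(2) by (simp add: is_path_iff_successively)
qed

lemma is_path_appendD:
  assumes "is_path E (xs @ ys)"
  shows "xs \<noteq> [] \<Longrightarrow> is_path E xs" and "ys \<noteq> [] \<Longrightarrow> is_path E ys"
  using assms by (auto simp: is_path_iff_successively successively_append_iff)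

lemma is_path_snoc:
  "is_path E xs \<Longrightarrow> y \<notin> set xs \<Longrightarrow> (last xs, y) \<in> E \<Longrightarrow> is_path E (xs @ [y])"
  by (auto simp: is_path_iff_successively successively_append_iff)

lemma on_path_sym: "sym E \<Longrightarrow> on_path E a b v \<Longrightarrow> on_path E b a v"
  unfolding on_path_def path_betw_def by (metis is_path_rev hd_rev last_rev set_rev)

text \<open>The cycle runs along the first path from a to m, the first vertex of the second path that
  lies on the first, and back to a along the second.\<close>
lemma diverging_paths_cycle:
  assumes "sym E" and ps: "is_path E (a # s)" and pt: "is_path E (a # t)"
    and "s \<noteq> []" "t \<noteq> []" "hd s \<noteq> hd t" "last s = last t"
  shows "\<exists>C. is_path E C \<and> 3 \<le> length C \<and> (last C, hd C) \<in> E"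
proof -
  have "\<exists>m\<in>set t. m \<in> set s" using assms(4,5,7) by (metis last_in_set)
  then obtain t1 m t2 where t: "t = t1 @ m # t2" "m \<in> set s" "\<forall>z\<in>set t1. z \<notin> set s"
    using split_list_first_prop[of t "\<lambda>z. z \<in> set s"] by blast
  obtain s1 s2 where s: "s = s1 @ m # s2" using t(2) by (meson split_list)
  define C where "C = (a # s1) @ rev (t1 @ [m])"
  have "is_path E (((a # s1) @ [m]) @ s2)" using ps s by simp
  then have "is_path E ((a # s1) @ [m])" by (blast dest: is_path_appendD)
  then have s1m: "successively (\<lambda>x y. (x, y) \<in> E) (a # s1)" "(last (a # s1), m) \<in> E"
    unfolding is_path_iff_successively successively_append_iff by auto
  have "is_path E ([a] @ (t1 @ [m]) @ t2)" using pt t by simp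
  then have "is_path E (rev (t1 @ [m]))"
    by (blast dest: is_path_appendD is_path_rev[OF \<open>sym E\<close>])
  then have "successively (\<lambda>x y. (x, y) \<in> E) ((a # s1) @ (m # rev t1))"
    unfolding successively_append_iff using s1m by (simp add: is_path_iff_successively)
  then have "is_path E C"
    using ps pt s t unfolding C_def by (auto simp: is_path_iff_successively)
  moreover have "3 \<le> length C"
  proof (cases t1)
    case Nil
    then have "s1 \<noteq> []" using s t assms(6) by auto
    then show ?thesis unfolding C_def by (cases s1) auto
  qed (simp add: C_def)
  moreover have "(last C, hd C) \<in> E"
  proof -
    have "last C = hd t" unfolding C_def using t by (cases t1) auto
    moreover have "(a, hd t) \<in> E" using pt \<open>t \<noteq> []\<close>
      by (cases t) (auto simp: is_path_iff_successively)
    ultimately show ?thesis unfolding C_def using \<open>sym E\<close> by (auto dest: symD)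
  qed
  ultimately show ?thesis by blast
qed

lemma is_path_unique:
  assumes "sym E" and acyclic: "\<not> (\<exists>C. is_path E C \<and> 3 \<le> length C \<and> (last C, hd C) \<in> E)"
  shows "is_path E xs \<Longrightarrow> is_path E ys \<Longrightarrow> hd xs = hd ys \<Longrightarrow> last xs = last ys \<Longrightarrow> xs = ys"
proof (induction xs arbitrary: ys)
  case Nil
  then show ?case by (simp add: is_path_def)
next
  case (Cons a xs)
  obtain ys' where ys: "ys = a # ys'" using Cons.prems by (cases ys) (auto simp: is_path_def)
  have "xs = [] \<longleftrightarrow> ys' = []"
    using Cons.prems ys unfolding is_path_iff_successively
    by (metis distinct.simps(2) last.simps last_in_set)
  moreover have "xs = ys'" if "xs \<noteq> []" "ys' \<noteq> []"
  proof (cases "hd xs = hd ys'")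
    case True
    then show ?thesis
      using Cons.IH Cons.prems ys that by (auto simp: is_path_iff_successively successively_Cons
          split: list.splits)
  next
    case False
    then show ?thesis
      using diverging_paths_cycle[OF \<open>sym E\<close>, of a xs ys'] Cons.prems ys that acyclic by auto
  qed
  ultimately show ?case using ys by auto
qed

locale rooted_tree =
  fixes V :: "'a set" and E :: "('a \<times> 'a) set" and r :: 'a
  assumes tree: "is_tree V E" and root_in_V: "r \<in> V"
begin

lemma sym_E: "sym E" and irrefl_E: "irrefl E" and E_subset: "E \<subseteq> V \<times> V"
  and acyclic: "\<not> (\<exists>C. is_path E C \<and> 3 \<le> length C \<and> (last C, hd C) \<in> E)"
  and connected: "\<And>u v. u \<in> V \<Longrightarrow> v \<in> V \<Longrightarrow> \<exists>xs. path_betw E u v xs"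
  using tree unfolding is_tree_def by auto

lemma path_betw_unique: "path_betw E u v xs \<Longrightarrow> path_betw E u v ys \<Longrightarrow> xs = ys"
  unfolding path_betw_def using is_path_unique[OF sym_E acyclic] by metis

lemma on_path_iff: "path_betw E u v xs \<Longrightarrow> on_path E u v x \<longleftrightarrow> x \<in> set xs"
  unfolding on_path_def using path_betw_unique by blast

lemma on_path_suffix:
  assumes "on_path E a b x" "on_path E x b y"
  shows "on_path E a b y"
proof -
  obtain q1 q2 where q: "path_betw E a b (q1 @ x # q2)"
    using assms(1) unfolding on_path_def by (metis split_list)
  then have "path_betw E x b (x # q2)"
    unfolding path_betw_def by (auto dest: is_path_appendD(2)[of E q1])
  then show ?thesis using assms(2) q by (auto simp: on_path_iff)
qed

lemma on_path_both_sides: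
  assumes "on_path E a b x" "on_path E x a y" "on_path E x b y"
  shows "y = x"
proof -
  obtain q1 q2 where q: "path_betw E a b (q1 @ x # q2)"
    using assms(1) unfolding on_path_def by (metis split_list)
  then have "path_betw E x b (x # q2)"
    unfolding path_betw_def by (auto dest: is_path_appendD(2)[of E q1])
  moreover have "is_path E (rev (q1 @ [x]))"
    using q is_path_appendD(1)[of E "q1 @ [x]" q2] unfolding path_betw_def
    by (intro is_path_rev[OF sym_E]) simp
  then have "path_betw E x a (rev (q1 @ [x]))"
    using q unfolding path_betw_def by (cases q1) (auto simp: last_rev)
  ultimately have "y \<in> set (x # q2)" "y \<in> set (x # q1)" using assms(2,3) by (auto simp: on_path_iff)
  then show ?thesis using q unfolding path_betw_def is_path_def by auto
qed

lemma path_subset_V: "is_path E q \<Longrightarrow> hd q \<in> V \<Longrightarrow> set q \<subseteq> V"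
proof (induction q rule: rev_induct)
  case (snoc x q)
  then show ?case using E_subset
    by (cases "q = []") (auto simp: is_path_iff_successively successively_append_iff)
qed simp

definition root_path :: "'a \<Rightarrow> 'a list" where
  "root_path x = (THE xs. path_betw E r x xs)"

lemma root_path_eqI: "x \<in> V \<Longrightarrow> path_betw E r x xs \<Longrightarrow> root_path x = xs"
  unfolding root_path_def using path_betw_unique by blast

lemma root_path_betw: "x \<in> V \<Longrightarrow> path_betw E r x (root_path x)"
  using connected[OF root_in_V] root_path_eqI by blast

lemma root_path_ne: "x \<in> V \<Longrightarrow> root_path x \<noteq> []"
  and root_path_last: "x \<in> V \<Longrightarrow> last (root_path x) = x"
  and root_path_hd: "x \<in> V \<Longrightarrow> hd (root_path x) = r"
  and root_path_is_path: "x \<in> V \<Longrightarrow> is_path E (root_path x)"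
  using root_path_betw unfolding path_betw_def is_path_def by auto

lemma root_path_subset_V: "x \<in> V \<Longrightarrow> set (root_path x) \<subseteq> V"
  using path_subset_V root_path_is_path root_path_hd root_in_V by metis

lemma mem_subtree_iff: "x \<in> subtree V E r u \<longleftrightarrow> x \<in> V \<and> u \<in> set (root_path x)"
  unfolding subtree_def using on_path_iff[OF root_path_betw] by auto

lemma root_path_prefix:
  assumes "x \<in> V" "v \<in> set (root_path x)"
  shows "\<exists>s. root_path x = root_path v @ s"
proof -
  obtain p1 p2 where p: "root_path x = (p1 @ [v]) @ p2"
    using assms(2) by (metis split_list append_assoc append_Cons append_Nil)
  moreover have "is_path E (p1 @ [v])"
    using root_path_is_path[OF assms(1)] p is_path_appendD(1) by (metis snoc_eq_iff_butlast)
  ultimately have "path_betw E r v (p1 @ [v])"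
    using root_path_hd[OF assms(1)] unfolding path_betw_def by (cases p1) auto
  then have "root_path v = p1 @ [v]"
    using root_path_eqI root_path_subset_V assms by blast
  then show ?thesis using p by auto
qed

lemma root_path_adjacent:
  assumes "z \<in> V" "z' \<in> V" "(z, z') \<in> E"
  shows "root_path z' = root_path z @ [z'] \<or> root_path z = root_path z' @ [z]"
proof (cases "z' \<in> set (root_path z)")
  case False
  then have "path_betw E r z' (root_path z @ [z'])"
    using assms root_path_is_path root_path_hd root_path_last root_path_ne
    unfolding path_betw_def by (simp add: is_path_snoc)
  then show ?thesis using root_path_eqI assms(2) by blast
next
  case True
  then obtain s where s: "root_path z = root_path z' @ s" using root_path_prefix assms(1) by blast
  have "z \<noteq> z'" using assms(3) irrefl_E by (auto simp: irrefl_def)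
  then have "s \<noteq> []" "last s = z"
    using s root_path_last assms(1,2) by (metis append_Nil2 last_appendR)+
  have "root_path z = butlast (root_path z') @ (z' # s)"
    using s root_path_ne[OF assms(2)] root_path_last[OF assms(2)]
    by (metis append_assoc append_butlast_last_id append_Cons append_Nil)
  then have "is_path E (z' # s)"
    using root_path_is_path[OF assms(1)] is_path_appendD(2) by (metis list.distinct(1))
  then have "length (z' # s) < 3"
    using acyclic assms(3) \<open>s \<noteq> []\<close> \<open>last s = z\<close> by fastforce
  then have "s = [z]" using \<open>s \<noteq> []\<close> \<open>last s = z\<close> by (cases s) auto
  then show ?thesis using s by blast
qed

lemma adjacent_subtree:
  assumes "x \<in> subtree V E r v - {v}" "(x, y) \<in> E"
  shows "y \<in> subtree V E r v"
proof -
  have "x \<in> V" "y \<in> V" "v \<in> set (root_path x)" using assms E_subset mem_subtree_iff by auto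
  then show ?thesis
    using root_path_adjacent[OF _ _ assms(2)] assms(1) by (auto simp: mem_subtree_iff)
qed

lemma path_leaving_subtree:
  "is_path E q \<Longrightarrow> hd q \<in> subtree V E r v - {v} \<Longrightarrow> last q \<notin> subtree V E r v - {v}
    \<Longrightarrow> v \<in> set q"
proof (induction q)
  case (Cons x q)
  show ?case
  proof (cases q)
    case (Cons y q')
    then have "(x, y) \<in> E" "is_path E q"
      using Cons.prems(1) by (auto simp: is_path_iff_successively)
    then have "y \<in> subtree V E r v" using adjacent_subtree Cons.prems(2) by simp
    then show ?thesis using Cons.IH Cons.prems \<open>is_path E q\<close> \<open>q = y # q'\<close> by auto
  qed (use Cons.prems in simp)
qed (simp add: is_path_def)

lemma on_path_leaving_subtree:
  assumes "a \<in> subtree V E r v - {v}" "b \<in> V" "b \<notin> subtree V E r v - {v}"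
  shows "on_path E a b v"
proof -
  obtain q where "path_betw E a b q"
    using connected assms(1,2) by (auto simp: subtree_def)
  then show ?thesis
    using path_leaving_subtree assms unfolding on_path_def path_betw_def by blast
qed

lemma root_path_length_less:
  assumes "b \<in> subtree V E r a - {a}"
  shows "length (root_path a) < length (root_path b)"
proof -
  have b: "b \<in> V" "a \<in> set (root_path b)" "b \<noteq> a" using assms mem_subtree_iff by auto
  then obtain s where s: "root_path b = root_path a @ s" using root_path_prefix by blast
  have "a \<in> V" using b root_path_subset_V by blast
  then have "s \<noteq> []"
    using s b root_path_last by (metis append_Nil2)
  then show ?thesis using s by simp
qed

lemma proper_subtree_trans:
  assumes "z \<in> subtree V E r v - {v}" "x \<in> subtree V E r z"
  shows "x \<in> subtree V E r v - {v}"
proof -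
  have "x \<in> subtree V E r v" using assms root_path_prefix by (fastforce simp: mem_subtree_iff)
  moreover have "x \<noteq> v"
  proof
    assume "x = v"
    then obtain s where "root_path v = root_path z @ s"
      using assms(2) root_path_prefix mem_subtree_iff by blast
    then show False using root_path_length_less[OF assms(1)] by simp
  qed
  ultimately show ?thesis by blast
qed

end

lemma igreater_ishift_ishift: "igreater (ishift I c) (ishift J c) \<longleftrightarrow> igreater I J"
  by (simp add: igreater_def ishift_def)

lemma igreater_ishiftI: "igreater I J \<Longrightarrow> igreater (ishift I c) J"
  by (simp add: igreater_def ishift_def)

lemma igreater_trans: "igreater I J \<Longrightarrow> fst J < snd J \<Longrightarrow> igreater J K \<Longrightarrow> igreater I K"
  by (simp add: igreater_def)

lemma iinter_ishift_ishift: "iinter (ishift I c) (ishift J c) \<longleftrightarrow> iinter I J"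
  by (auto simp: iinter_def ishift_def)

lemma iinter_commute: "iinter I J \<longleftrightarrow> iinter J I"
  by (auto simp: iinter_def)

lemma ilen_ishift: "ilen (ishift I c) = ilen I"
  by (simp add: ilen_def ishift_def)

locale lifted_strategy = rooted_tree V E r for V E r +
  fixes w :: "'a \<Rightarrow> nat" and f :: "'a \<Rightarrow> nat \<times> nat" and R :: "'a set" and c :: nat
  assumes ext_f: "ext_strategy V E w f"
    and R_dominates: "v \<in> R \<Longrightarrow> x \<in> subtree V E r v - {v} \<Longrightarrow> igreater (f v) (f x)"
begin

definition kept :: "'a set" where
  "kept = (\<Union>v\<in>R. subtree V E r v - {v})"

definition lifted :: "'a \<Rightarrow> nat \<times> nat" where
  "lifted u = (if u \<in> kept then f u else ishift (f u) c)"

lemma f_nonempty: "u \<in> V \<Longrightarrow> fst (f u) < snd (f u)"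
  and f_witness: "\<lbrakk>v1 \<in> V; v2 \<in> V; v1 \<noteq> v2; iinter (f v1) (f v2)\<rbrakk> \<Longrightarrow>
    \<exists>v3. on_path E v1 v2 v3 \<and> igreater (f v3) (f v1) \<and> igreater (f v3) (f v2)"
  using ext_f unfolding ext_strategy_def by blast+

lemma kept_subset_V: "kept \<subseteq> V"
  unfolding kept_def subtree_def by blast

lemma kept_subtree_closed: "u \<in> kept \<Longrightarrow> x \<in> subtree V E r u \<Longrightarrow> x \<in> kept"
  unfolding kept_def using proper_subtree_trans by blast

lemma kept_topmost:
  assumes "u \<in> kept"
  shows "\<exists>v\<in>R. u \<in> subtree V E r v - {v} \<and> v \<notin> kept"
proof -
  define S where "S = {v \<in> R. u \<in> subtree V E r v - {v}}"
  obtain v0 where "v0 \<in> S" using assms unfolding kept_def S_def by blast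
  then obtain v where v: "v \<in> S" and v_min: "\<And>y. y \<in> S \<Longrightarrow> length (root_path v) \<le> length (root_path y)"
    using ex_has_least_nat[of "\<lambda>v. v \<in> S" v0 "\<lambda>v. length (root_path v)"] by blast
  have "v \<notin> kept"
  proof
    assume "v \<in> kept"
    then obtain v' where v': "v' \<in> R" "v \<in> subtree V E r v' - {v'}" unfolding kept_def by blast
    have "u \<in> subtree V E r v" using v S_def by blast
    then have "v' \<in> S" using proper_subtree_trans[OF v'(2)] v' S_def by blast
    then show False using v_min root_path_length_less[OF v'(2)] by fastforce
  qed
  then show ?thesis using v S_def by blast
qed

lemma kept_exit:
  assumes "a \<in> kept" "b \<in> V" "b \<notin> kept"
  shows "\<exists>v. v \<notin> kept \<and> on_path E a b v \<and> igreater (f v) (f a)"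
proof -
  obtain v where v: "v \<in> R" "a \<in> subtree V E r v - {v}" "v \<notin> kept"
    using kept_topmost assms(1) by blast
  then have "b \<notin> subtree V E r v - {v}" using assms(3) unfolding kept_def by blast
  then show ?thesis using on_path_leaving_subtree v assms(2) R_dominates by blast
qed

lemma igreater_lifted:
  assumes "igreater (f v) (f x)" "v \<notin> kept \<or> x \<in> kept"
  shows "igreater (lifted v) (lifted x)"
  using assms by (auto simp: lifted_def igreater_ishift_ishift igreater_ishiftI)

lemma lifted_witness_mixed:
  assumes a: "a \<in> kept" and b: "b \<in> V" "b \<notin> kept" and inter: "iinter (lifted a) (lifted b)"
  shows "\<exists>v. on_path E a b v \<and> igreater (lifted v) (lifted a) \<and> igreater (lifted v) (lifted b)"
proof -
  have aV: "a \<in> V" using a kept_subset_V by blast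
  obtain v where v: "v \<notin> kept" "on_path E a b v" "igreater (f v) (f a)"
    using kept_exit a b by blast
  consider "snd (f b) \<le> fst (f a)" | "snd (f a) \<le> fst (f b)" | "iinter (f a) (f b)"
    using f_nonempty[OF aV] f_nonempty[OF b(1)] unfolding iinter_def by linarith
  then show ?thesis
  proof cases
    case 1
    then have "igreater (f v) (f b)" using v(3) f_nonempty[OF aV] by (simp add: igreater_def)
    then show ?thesis using v igreater_lifted by blast
  next
    case 2
    then show ?thesis using inter a b by (simp add: lifted_def iinter_def ishift_def)
  next
    case 3
    moreover have "a \<noteq> b" using a b by blast
    ultimately obtain v3 where v3: "on_path E a b v3" "igreater (f v3) (f a)" "igreater (f v3) (f b)"
      using f_witness aV b by blast
    show ?thesis
    proof (cases "v3 \<in> kept")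
      case False
      then show ?thesis using v3 igreater_lifted by blast
    next
      case True
      then obtain v' where v': "v' \<notin> kept" "on_path E v3 b v'" "igreater (f v') (f v3)"
        using kept_exit b by blast
      have "v3 \<in> V" using True kept_subset_V by blast
      then have "igreater (f v') (f a)" "igreater (f v') (f b)"
        using igreater_trans[OF v'(3) f_nonempty] v3 by blast+
      then show ?thesis using v' on_path_suffix[OF v3(1) v'(2)] igreater_lifted by blast
    qed
  qed
qed

text \<open>Were v3 strictly below some v in R, the paths from v3 to both ends would leave that
  subtree through v, which would then occur twice on the path from v1 to v2.\<close>
lemma on_path_not_kept:
  assumes "v1 \<in> V" "v2 \<in> V" "v1 \<notin> kept" "v2 \<notin> kept" "on_path E v1 v2 v3"
  shows "v3 \<notin> kept"
proof
  assume "v3 \<in> kept"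
  then obtain v where v: "v \<in> R" "v3 \<in> subtree V E r v - {v}" unfolding kept_def by blast
  then have "v1 \<notin> subtree V E r v - {v}" "v2 \<notin> subtree V E r v - {v}"
    using assms(3,4) unfolding kept_def by blast+
  then have "on_path E v3 v1 v" "on_path E v3 v2 v"
    using on_path_leaving_subtree v(2) assms(1,2) by blast+
  then show False using on_path_both_sides[OF assms(5)] v(2) by blast
qed

lemma ext_strategy_lifted: "ext_strategy V E w lifted"
  unfolding ext_strategy_def
proof (intro conjI ballI impI)
  fix u assume "u \<in> V"
  then show "fst (lifted u) < snd (lifted u)"
    using f_nonempty by (simp add: lifted_def ishift_def)
  show "w u \<le> ilen (lifted u)"
    using ext_f \<open>u \<in> V\<close> by (simp add: ext_strategy_def lifted_def ilen_ishift)
next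
  fix v1 v2 assume v: "v1 \<in> V" "v2 \<in> V" "v1 \<noteq> v2 \<and> iinter (lifted v1) (lifted v2)"
  consider "v1 \<in> kept" "v2 \<in> kept" | "v1 \<in> kept" "v2 \<notin> kept" | "v1 \<notin> kept" "v2 \<in> kept"
    | "v1 \<notin> kept" "v2 \<notin> kept" by blast
  then show "\<exists>v3. on_path E v1 v2 v3 \<and> igreater (lifted v3) (lifted v1) \<and> igreater (lifted v3) (lifted v2)"
  proof cases
    case 1
    then obtain v3 where "on_path E v1 v2 v3" "igreater (f v3) (f v1)" "igreater (f v3) (f v2)"
      using f_witness v by (auto simp: lifted_def)
    then show ?thesis using 1 igreater_lifted by blast
  next
    case 2
    then show ?thesis using lifted_witness_mixed v by blast
  next
    case 3
    then show ?thesis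
      using lifted_witness_mixed[of v2 v1] v on_path_sym[OF sym_E] iinter_commute by blast
  next
    case 4
    then obtain v3 where "on_path E v1 v2 v3" "igreater (f v3) (f v1)" "igreater (f v3) (f v2)"
      using f_witness v by (auto simp: lifted_def iinter_ishift_ishift)
    then show ?thesis using 4 on_path_not_kept v igreater_lifted by blast
  qed
qed

lemma structured_ext_lifted:
  assumes "structured_ext V E r w f"
  shows "structured_ext V E r w lifted"
  unfolding structured_ext_def
proof (intro conjI allI impI ballI ext_strategy_lifted)
  fix L u x assume "layer_comp V E w L \<and> is_root E r L u" "x \<in> subtree V E r u - {u}"
  then have "igreater (f u) (f x)" using assms unfolding structured_ext_def by blast
  then show "igreater (lifted u) (lifted x)"
    using kept_subtree_closed \<open>x \<in> subtree V E r u - {u}\<close> igreater_lifted by blast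
qed

end

theorem mainTheorem18:
  fixes V :: "'a set" and E :: "('a \<times> 'a) set" and r :: 'a and w :: "'a \<Rightarrow> nat"
    and fopt :: "'a \<Rightarrow> nat \<times> nat" and L :: "'a set"
  assumes "is_tree V E" and "r \<in> V"
    and "up_monotonic V E r w" and "rounded V w"
    and "optimal_structured V E r w fopt"
    and "layer_comp V E w L"
  shows "structured_ext V E r w
           (\<lambda>u. if (\<exists>L' v. layer_comp V E w L' \<and> directly_below E r L' L \<and> is_root E r L' v
                          \<and> u \<in> subtree V E r v - {v})
                then fopt u else ishift (fopt u) (layer_cost w L))"
proof -
  define R where "R = {v. \<exists>L'. layer_comp V E w L' \<and> directly_below E r L' L \<and> is_root E r L' v}"
  have fopt: "structured_ext V E r w fopt"
    using assms(5) unfolding optimal_structured_def by blast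
  interpret lifted_strategy V E r w fopt R "layer_cost w L"
  proof
    show "ext_strategy V E w fopt" using fopt unfolding structured_ext_def by blast
  next
    fix v x assume "v \<in> R" "x \<in> subtree V E r v - {v}"
    then show "igreater (fopt v) (fopt x)" using fopt unfolding R_def structured_ext_def by blast
  qed (use assms(1,2) in \<open>simp_all\<close>)
  have kept_iff: "u \<in> kept \<longleftrightarrow> (\<exists>L' v. layer_comp V E w L' \<and> directly_below E r L' L \<and> is_root E r L' v
                          \<and> u \<in> subtree V E r v - {v})" for u
    unfolding kept_def unfolding R_def by blast
  show ?thesis
    using structured_ext_lifted[OF fopt] by (simp add: lifted_def[abs_def] kept_iff)
qed

end
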